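(* On a cell of the combinatorial model whose ribbon graph $\Gamma$ has only odd-valent vertices, for every edge $e$ with length $\ell$ one has $\Omega[\mathcal P(d\ell)]=d\ell$, where $$\Omega=\sum_f\eta_f,\qquad \mathcal P=\frac14\sum_{x\in V(\Gamma)}\sum_{1\le j<k\le n_x}(-1)^{k-j-1}\frac{\partial}{\partial\ell_j}\wedge\frac{\partial}{\partial\ell_k}.$$
   Context: $\Gamma$ is a metric ribbon graph (from a Jenkins–Strebel differential) with edge lengths $\ell_e$ as coordinates on the cell and faces $f$. For a face $f$ with boundary edges $e_1,\dots,e_{n_f}$ in counterclockwise order, $\eta_f=\sum_{1\le j<k\le n_f}d\ell_j\wedge d\ell_k$. In $\mathcal P$, for each vertex $x$ of valence $n_x$, $e_1,\dots,e_{n_x}$ are the edges incident to $x$ in counterclockwise order with lengths $\ell_1,\dots,\ell_{n_x}$ (both $\Omega$ and $\mathcal P$ are independent of the choice of the first edge). $\mathcal P(d\ell)$ denotes the contraction of the bivector with $d\ell$ and $\Omega[X]$ the contraction of the 2-form with the vector field $X$. *)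

theory Defs
  imports Complex_Main "HOL-Combinatorics.Permutations"
begin

(* A ribbon graph is encoded by a finite set H of half-edges, a permutation s0 of H
   (counterclockwise cyclic order of half-edges around each vertex) and a
   fixed-point-free involution s1 of H (the two half-edges of an edge).
   Vertices = s0-cycles, edges = s1-cycles {h, s1 h},
   faces = cycles of  (inv s0) o s1, which traverses every face boundary counterclockwise. *)

definition cyc_len :: "('h \<Rightarrow> 'h) \<Rightarrow> 'h \<Rightarrow> nat" where
  "cyc_len f h = (LEAST n. 0 < n \<and> (f ^^ n) h = h)"

definition orb :: "('h \<Rightarrow> 'h) \<Rightarrow> 'h \<Rightarrow> 'h set" where
  "orb f h = {(f ^^ n) h | n. True}"

definition ribbon_graph :: "'h set \<Rightarrow> ('h \<Rightarrow> 'h) \<Rightarrow> ('h \<Rightarrow> 'h) \<Rightarrow> bool" where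
  "ribbon_graph H s0 s1 \<longleftrightarrow>
     finite H \<and> H \<noteq> {} \<and> s0 permutes H \<and> s1 permutes H \<and>
     (\<forall>h\<in>H. s1 h \<noteq> h \<and> s1 (s1 h) = h) \<and>
     (\<forall>h\<in>H. \<forall>h'\<in>H. (h, h') \<in> ({(a, s0 a) | a. a \<in> H} \<union> {(a, s1 a) | a. a \<in> H})\<^sup>*)"

definition edge_of :: "('h \<Rightarrow> 'h) \<Rightarrow> 'h \<Rightarrow> 'h set" where
  "edge_of s1 h = {h, s1 h}"

definition rg_edges :: "'h set \<Rightarrow> ('h \<Rightarrow> 'h) \<Rightarrow> 'h set set" where
  "rg_edges H s1 = edge_of s1 ` H"

definition rg_vertices :: "'h set \<Rightarrow> ('h \<Rightarrow> 'h) \<Rightarrow> 'h set set" where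
  "rg_vertices H s0 = orb s0 ` H"

definition face_perm :: "('h \<Rightarrow> 'h) \<Rightarrow> ('h \<Rightarrow> 'h) \<Rightarrow> 'h \<Rightarrow> 'h" where
  "face_perm s0 s1 = inv s0 \<circ> s1"

definition rg_faces :: "'h set \<Rightarrow> ('h \<Rightarrow> 'h) \<Rightarrow> ('h \<Rightarrow> 'h) \<Rightarrow> 'h set set" where
  "rg_faces H s0 s1 = orb (face_perm s0 s1) ` H"

(* chosen first half-edge of a vertex / face (all statements are independent of it) *)
definition rep :: "'h set \<Rightarrow> 'h" where
  "rep x = (SOME h. h \<in> x)"

definition valence :: "('h \<Rightarrow> 'h) \<Rightarrow> 'h \<Rightarrow> nat" where
  "valence s0 h = cyc_len s0 h"

(* Tangent vectors X and covectors (1-forms) \<alpha> are given by their coefficients on the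
   coordinate basis \<partial>/\<partial>\<ell>_e resp. d\<ell>_e, i.e. as functions on edges. *)

definition wedge_form :: "'e \<Rightarrow> 'e \<Rightarrow> ('e \<Rightarrow> real) \<Rightarrow> ('e \<Rightarrow> real) \<Rightarrow> real" where
  "wedge_form a b X Y = X a * Y b - X b * Y a"

definition wedge_vec :: "'e \<Rightarrow> 'e \<Rightarrow> ('e \<Rightarrow> real) \<Rightarrow> ('e \<Rightarrow> real) \<Rightarrow> real" where
  "wedge_vec a b \<alpha> \<beta> = \<alpha> a * \<beta> b - \<alpha> b * \<beta> a"

definition eta_face ::
  "('h \<Rightarrow> 'h) \<Rightarrow> ('h \<Rightarrow> 'h) \<Rightarrow> 'h set \<Rightarrow> ('h set \<Rightarrow> real) \<Rightarrow> ('h set \<Rightarrow> real) \<Rightarrow> real" where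
  "eta_face s0 s1 f X Y =
     (let s2 = face_perm s0 s1; h = rep f in
      \<Sum>k<cyc_len s2 h. \<Sum>j<k.
        wedge_form (edge_of s1 ((s2 ^^ j) h)) (edge_of s1 ((s2 ^^ k) h)) X Y)"

definition Omega ::
  "'h set \<Rightarrow> ('h \<Rightarrow> 'h) \<Rightarrow> ('h \<Rightarrow> 'h) \<Rightarrow> ('h set \<Rightarrow> real) \<Rightarrow> ('h set \<Rightarrow> real) \<Rightarrow> real" where
  "Omega H s0 s1 X Y = (\<Sum>f\<in>rg_faces H s0 s1. eta_face s0 s1 f X Y)"

definition Pbiv ::
  "'h set \<Rightarrow> ('h \<Rightarrow> 'h) \<Rightarrow> ('h \<Rightarrow> 'h) \<Rightarrow> ('h set \<Rightarrow> real) \<Rightarrow> ('h set \<Rightarrow> real) \<Rightarrow> real" where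
  "Pbiv H s0 s1 \<alpha> \<beta> = 1/4 *
     (\<Sum>x\<in>rg_vertices H s0. let h = rep x in
        \<Sum>k<cyc_len s0 h. \<Sum>j<k. (-1::real) ^ (k - j - 1) *
          wedge_vec (edge_of s1 ((s0 ^^ j) h)) (edge_of s1 ((s0 ^^ k) h)) \<alpha> \<beta>)"

definition dl :: "'e \<Rightarrow> 'e \<Rightarrow> real" where
  "dl e = (\<lambda>c. if c = e then 1 else 0)"

definition P_contr ::
  "'h set \<Rightarrow> ('h \<Rightarrow> 'h) \<Rightarrow> ('h \<Rightarrow> 'h) \<Rightarrow> ('h set \<Rightarrow> real) \<Rightarrow> ('h set \<Rightarrow> real)" where
  "P_contr H s0 s1 \<alpha> = (\<lambda>b. Pbiv H s0 s1 \<alpha> (dl b))"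

definition Omega_contr ::
  "'h set \<Rightarrow> ('h \<Rightarrow> 'h) \<Rightarrow> ('h \<Rightarrow> 'h) \<Rightarrow> ('h set \<Rightarrow> real) \<Rightarrow> ('h set \<Rightarrow> real) \<Rightarrow> real" where
  "Omega_contr H s0 s1 X = (\<lambda>Y. Omega H s0 s1 X Y)"

(* perimeter of a face as a linear function of the edge lengths (edges counted with multiplicity) *)
definition perimeter ::
  "('h \<Rightarrow> 'h) \<Rightarrow> ('h \<Rightarrow> 'h) \<Rightarrow> 'h set \<Rightarrow> ('h set \<Rightarrow> real) \<Rightarrow> real" where
  "perimeter s0 s1 f L =
     (let s2 = face_perm s0 s1; h = rep f in \<Sum>k<cyc_len s2 h. L (edge_of s1 ((s2 ^^ k) h)))"

(* tangent vectors to the cell of the combinatorial model (face perimeters fixed) *)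
definition cell_tangent ::
  "'h set \<Rightarrow> ('h \<Rightarrow> 'h) \<Rightarrow> ('h \<Rightarrow> 'h) \<Rightarrow> ('h set \<Rightarrow> real) \<Rightarrow> bool" where
  "cell_tangent H s0 s1 Y \<longleftrightarrow>
     (\<forall>e. e \<notin> rg_edges H s1 \<longrightarrow> Y e = 0) \<and>
     (\<forall>f\<in>rg_faces H s0 s1. perimeter s0 s1 f Y = 0)"

end

(*
  Contracting \<Omega> with X pairs X(e_g), for each half-edge g, with the face potential A g: the
  sum of Y over the edges following g on its face minus the sum over those preceding it. When the
  face perimeters of Y vanish, A obeys the corner rule A (s1 (s0 u)) = A u + Y(e_(s0 u)) + Y(e_u).
  Hence \<Omega>[\<P>(d\<ell>_e)](Y) = \<P>(d\<ell>_e, \<beta>) with \<beta>(e_u) = A u + A (s1 u) = W u + W (s0 u),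
  where W u = A (s1 u) - Y(e_u). At a vertex of odd valence the alternating coefficients
  (-1)^(k-j-1) telescope consistently around the whole cycle, giving
  \<P>(\<alpha>, \<beta>) = 1/4 \<Sum>_u \<alpha>(e_u) (W (s0 u) - W u); for \<alpha> = d\<ell>_e the two half-edges of e
  contribute 4 Y(e).
*)

theory Submission
  imports Defs "HOL-Combinatorics.Orbits"
begin

lemma
  assumes "permutation p"
  shows cyc_len_pos: "0 < cyc_len p h"
    and funpow_cyc_len: "(p ^^ cyc_len p h) h = h"
proof -
  obtain n where "0 < n" "(p ^^ n) h = h"
    using permutation_self[OF assms] .
  then have "\<exists>n. 0 < n \<and> (p ^^ n) h = h" by blast
  from LeastI_ex[OF this] show "0 < cyc_len p h" "(p ^^ cyc_len p h) h = h"
    unfolding cyc_len_def by simp_all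
qed

lemma funpow_mod_cyc_len:
  assumes "permutation p"
  shows "(p ^^ (n mod cyc_len p h)) h = (p ^^ n) h"
  by (rule funpow_mod_eq[OF funpow_cyc_len[OF assms]])

lemma funpow_cyc_len_neq:
  assumes "permutation p" "i < j" "j < cyc_len p h"
  shows "(p ^^ i) h \<noteq> (p ^^ j) h"
proof
  assume eq: "(p ^^ i) h = (p ^^ j) h"
  have inj: "inj (p ^^ i)"
    using assms(1) by (simp add: permutation_bijective bij_is_inj inj_fn)
  have "(p ^^ i) ((p ^^ (j - i)) h) = (p ^^ (i + (j - i))) h"
    by (simp add: funpow_add)
  with eq assms(2) have "(p ^^ i) ((p ^^ (j - i)) h) = (p ^^ i) h"
    by simp
  then have "(p ^^ (j - i)) h = h" by (rule injD[OF inj])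
  moreover have "0 < j - i" "j - i < cyc_len p h" using assms(2,3) by simp_all
  ultimately show False
    using not_less_Least[of "j - i" "\<lambda>n. 0 < n \<and> (p ^^ n) h = h"] unfolding cyc_len_def by blast
qed

lemma inj_on_funpow_cyc_len:
  assumes "permutation p"
  shows "inj_on (\<lambda>j. (p ^^ j) h) {..<cyc_len p h}"
  by (rule inj_onI) (metis assms funpow_cyc_len_neq lessThan_iff linorder_neqE_nat)

lemma Least_funpow_eq:
  assumes "permutation p" "j < cyc_len p h"
  shows "(LEAST i. (p ^^ i) h = (p ^^ j) h) = j"
proof (rule Least_equality)
  show "j \<le> i" if "(p ^^ i) h = (p ^^ j) h" for i
    using that funpow_cyc_len_neq[OF assms(1) _ assms(2), of i] by (meson not_le)
qed simp

lemma orb_eq_orbit: "permutation p \<Longrightarrow> orb p h = orbit p h"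
  by (simp add: orb_def orbit_altdef_permutation)

lemma orb_conv_funpow:
  assumes "permutation p"
  shows "orb p h = (\<lambda>j. (p ^^ j) h) ` {..<cyc_len p h}"
  using orbit_altdef_bounded[OF funpow_cyc_len cyc_len_pos, OF assms assms]
  by (auto simp: orb_eq_orbit[OF assms])

lemma self_in_orb: "h \<in> orb p h"
  unfolding orb_def by (auto intro: exI[of _ 0])

lemma orb_eq:
  assumes "permutation p" "g \<in> orb p h"
  shows "orb p g = orb p h"
  using orbit_cyclic_eq3[OF cyclic_on_orbit'[OF assms(1)]] assms(2)
  by (simp add: orb_eq_orbit[OF assms(1)])

lemma orb_subset: "p permutes S \<Longrightarrow> h \<in> S \<Longrightarrow> orb p h \<subseteq> S"
  unfolding orb_def by (auto intro: permutes_in_funpow_image)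

lemma
  assumes "permutation p"
  shows rep_orb_in: "rep (orb p h) \<in> orb p h"
    and orb_rep_orb: "orb p (rep (orb p h)) = orb p h"
proof -
  show "rep (orb p h) \<in> orb p h"
    unfolding rep_def using self_in_orb by (rule someI)
  then show "orb p (rep (orb p h)) = orb p h"
    by (rule orb_eq[OF assms])
qed

lemma funpow_rep_orb:
  assumes "permutation p"
  obtains j where "j < cyc_len p (rep (orb p g))" "g = (p ^^ j) (rep (orb p g))"
proof -
  have "g \<in> orb p (rep (orb p g))"
    using orb_rep_orb[OF assms] self_in_orb by metis
  with that show ?thesis
    using orb_conv_funpow[OF assms] by blast
qed

lemma sum_orb_rep:
  assumes "permutation p"
  shows "(\<Sum>j<cyc_len p (rep (orb p h)). G ((p ^^ j) (rep (orb p h)))) = (\<Sum>g\<in>orb p h. G g)"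
proof -
  define r where "r = rep (orb p h)"
  have "orb p h = orb p r"
    unfolding r_def by (rule orb_rep_orb[OF assms, symmetric])
  also have "\<dots> = (\<lambda>j. (p ^^ j) r) ` {..<cyc_len p r}"
    by (rule orb_conv_funpow[OF assms])
  finally show ?thesis
    unfolding r_def[symmetric] by (simp add: sum.reindex[OF inj_on_funpow_cyc_len[OF assms]])
qed

lemma orb_disjoint:
  assumes "permutation p" "orb p a \<noteq> orb p b"
  shows "orb p a \<inter> orb p b = {}"
proof (rule ccontr)
  assume "orb p a \<inter> orb p b \<noteq> {}"
  then obtain g where "g \<in> orb p a" "g \<in> orb p b" by blast
  then have "orb p a = orb p b" using orb_eq[OF assms(1)] by metis
  with assms(2) show False ..
qed

lemma sum_orbs:
  assumes "p permutes S" "finite S"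
  shows "(\<Sum>x\<in>orb p ` S. \<Sum>g\<in>x. G g) = (\<Sum>g\<in>S. G g)"
proof -
  have perm: "permutation p"
    using assms permutation_permutes by blast
  have "sum G (\<Union> (orb p ` S)) = (sum \<circ> sum) G (orb p ` S)"
  proof (rule sum.Union_disjoint)
    show "\<forall>x\<in>orb p ` S. finite x"
      by (auto intro: finite_subset[OF orb_subset[OF assms(1)] assms(2)])
    show "\<forall>x\<in>orb p ` S. \<forall>y\<in>orb p ` S. x \<noteq> y \<longrightarrow> x \<inter> y = {}"
      by (simp add: orb_disjoint[OF perm])
  qed
  moreover have "\<Union> (orb p ` S) = S"
  proof
    show "\<Union> (orb p ` S) \<subseteq> S"
      using orb_subset[OF assms(1)] by (simp add: UN_subset_iff)
    show "S \<subseteq> \<Union> (orb p ` S)"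
      using self_in_orb by fastforce
  qed
  ultimately show ?thesis by simp
qed

lemma sum_pairs_regroup:
  fixes x y c :: "nat \<Rightarrow> 'a::comm_ring"
  shows "(\<Sum>k<n. \<Sum>j<k. c (k - j - 1) * (x j * y k - x k * y j)) =
         (\<Sum>p<n. x p * ((\<Sum>k\<in>{p<..<n}. c (k - p - 1) * y k) - (\<Sum>j<p. c (p - j - 1) * y j)))"
proof (induction n)
  case 0
  then show ?case by simp
next
  case (Suc n)
  have "{p<..<Suc n} = insert n {p<..<n}" if "p < n" for p
    using that by auto
  moreover have "{n<..<Suc n} = {}" by auto
  ultimately have "(\<Sum>p<Suc n. x p * ((\<Sum>k\<in>{p<..<Suc n}. c (k - p - 1) * y k) - (\<Sum>j<p. c (p - j - 1) * y j)))
     = (\<Sum>p<n. x p * ((\<Sum>k\<in>{p<..<n}. c (k - p - 1) * y k) - (\<Sum>j<p. c (p - j - 1) * y j)))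
       + ((\<Sum>p<n. x p * (c (n - p - 1) * y n)) - x n * (\<Sum>j<n. c (n - j - 1) * y j))"
    by (simp add: sum.distrib[symmetric] algebra_simps)
  also have "(\<Sum>p<n. x p * (c (n - p - 1) * y n)) - x n * (\<Sum>j<n. c (n - j - 1) * y j)
      = (\<Sum>j<n. c (n - j - 1) * (x j * y n - x n * y j))"
    by (simp add: sum_distrib_left sum_subtractf[symmetric] algebra_simps)
  finally show ?case
    using Suc.IH by simp
qed

definition tail_minus_head :: "(nat \<Rightarrow> 'a::ab_group_add) \<Rightarrow> nat \<Rightarrow> nat \<Rightarrow> 'a" where
  "tail_minus_head y n j = (\<Sum>k\<in>{j<..<n}. y k) - (\<Sum>k<j. y k)"

lemma tail_minus_head_step:
  assumes "j < n" "(\<Sum>k<n. y k) = 0"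
  shows "tail_minus_head y n (Suc j mod n) = tail_minus_head y n j - y j - y (Suc j mod n)"
proof (cases "Suc j < n")
  case True
  then have "{j<..<n} = insert (Suc j) {Suc j<..<n}" by auto
  with True show ?thesis
    unfolding tail_minus_head_def by simp
next
  case False
  with assms(1) have "Suc j = n" by simp
  then have j: "j = n - 1" "Suc j mod n = 0" by simp_all
  have "{..<n} = insert 0 {0<..<n}"
    using assms(1) by auto
  with assms(2) have "(\<Sum>k\<in>{0<..<n}. y k) = - y 0"
    by (simp add: eq_neg_iff_add_eq_0 add.commute)
  moreover have "{..<n} = insert (n - 1) {..<n - 1}"
    using assms(1) by auto
  with assms(2) have "(\<Sum>k<n - 1. y k) = - y (n - 1)"
    by (simp add: eq_neg_iff_add_eq_0 add.commute)
  moreover have "{n - 1<..<n} = {}" by auto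
  ultimately show ?thesis
    using j unfolding tail_minus_head_def by simp
qed

lemma sum_alternating_telescope_lessThan:
  fixes v b :: "nat \<Rightarrow> 'a::comm_ring_1"
  assumes "\<And>j. j < p \<Longrightarrow> b j = v j + v (Suc j)"
  shows "(\<Sum>j<p. (-1) ^ (p - j - 1) * b j) = v p - (-1) ^ p * v 0"
  using assms
proof (induction p)
  case 0
  then show ?case by simp
next
  case (Suc p)
  have "(-1) ^ (Suc p - j - 1) * b j = - ((-1) ^ (p - j - 1) * b j)" if "j < p" for j
  proof -
    from that have "Suc p - j - 1 = Suc (p - j - 1)" by simp
    then show ?thesis by simp
  qed
  then have "(\<Sum>j<Suc p. (-1) ^ (Suc p - j - 1) * b j) = - (\<Sum>j<p. (-1) ^ (p - j - 1) * b j) + b p"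
    by (simp add: sum_negf)
  also have "\<dots> = - (v p - (-1) ^ p * v 0) + (v p + v (Suc p))"
    using Suc by simp
  finally show ?case
    by simp
qed

lemma sum_alternating_telescope_greaterThanLessThan:
  fixes v b :: "nat \<Rightarrow> 'a::comm_ring_1"
  assumes "\<And>k. p < k \<Longrightarrow> k < n \<Longrightarrow> b k = v k + v (Suc k)" "p < n"
  shows "(\<Sum>k\<in>{p<..<n}. (-1) ^ (k - p - 1) * b k) = v (Suc p) - (-1) ^ (n - p - 1) * v n"
  using assms
proof (induction n)
  case 0
  then show ?case by simp
next
  case (Suc n)
  show ?case
  proof (cases "p < n")
    case True
    then have "{p<..<Suc n} = insert n {p<..<n}" "n - p = Suc (n - p - 1)" by auto
    with True Suc show ?thesis
      by (simp add: algebra_simps)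
  next
    case False
    with Suc.prems(2) have "n = p" by simp
    moreover have "{p<..<Suc p} = {}" by auto
    ultimately show ?thesis by simp
  qed
qed

lemma sum_alternating_pairs_odd_cycle:
  fixes d w b :: "nat \<Rightarrow> 'a::comm_ring_1"
  assumes "odd n" "\<And>k. k < n \<Longrightarrow> b k = w k + w (Suc k mod n)"
  shows "(\<Sum>k<n. \<Sum>j<k. (-1) ^ (k - j - 1) * (d j * b k - d k * b j)) =
         (\<Sum>j<n. d j * (w (Suc j mod n) - w j))"
proof -
  define v where "v i = w (i mod n)" for i
  have bv: "b k = v k + v (Suc k)" if "k < n" for k
    using assms(2) that by (simp add: v_def)
  have regroup: "(\<Sum>k\<in>{p<..<n}. (-1) ^ (k - p - 1) * b k) - (\<Sum>j<p. (-1) ^ (p - j - 1) * b j)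
        = w (Suc p mod n) - w p" if p: "p < n" for p
  proof -
    \<comment> \<open>oddness of \<open>n\<close> makes the boundary terms \<open>v n = v 0\<close> of the two telescopes cancel\<close>
    have "even (n - p - 1 + p)"
      using assms(1) p by simp
    then have "(-1::'a) ^ (n - p - 1) = (-1) ^ p"
      by (metis even_add neg_one_even_power neg_one_odd_power)
    moreover have "v n = v 0" "v p = w p" "v (Suc p) = w (Suc p mod n)"
      using p by (simp_all add: v_def)
    ultimately show ?thesis
      using p bv sum_alternating_telescope_greaterThanLessThan[of p n b v]
        sum_alternating_telescope_lessThan[of p b v] by simp
  qed
  have "(\<Sum>k<n. \<Sum>j<k. (-1) ^ (k - j - 1) * (d j * b k - d k * b j)) =
        (\<Sum>p<n. d p * ((\<Sum>k\<in>{p<..<n}. (-1) ^ (k - p - 1) * b k) - (\<Sum>j<p. (-1) ^ (p - j - 1) * b j)))"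
    by (rule sum_pairs_regroup)
  also have "\<dots> = (\<Sum>j<n. d j * (w (Suc j mod n) - w j))"
    by (rule sum.cong) (auto simp only: regroup lessThan_iff)
  finally show ?thesis .
qed

lemma sum_swap_innermost3:
  "(\<Sum>x\<in>A. \<Sum>k<n x. \<Sum>j<k. \<Sum>g\<in>G. f x k j g) = (\<Sum>g\<in>G. \<Sum>x\<in>A. \<Sum>k<n x. \<Sum>j<k. f x k j g)"
proof -
  have "(\<Sum>x\<in>A. \<Sum>k<n x. \<Sum>j<k. \<Sum>g\<in>G. f x k j g) = (\<Sum>x\<in>A. \<Sum>g\<in>G. \<Sum>k<n x. \<Sum>j<k. f x k j g)"
    by (simp add: sum.swap[of _ "{..<_}" G])
  also have "\<dots> = (\<Sum>g\<in>G. \<Sum>x\<in>A. \<Sum>k<n x. \<Sum>j<k. f x k j g)"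
    by (rule sum.swap)
  finally show ?thesis .
qed

lemma Pbiv_sum_right:
  "Pbiv H s0 s1 \<alpha> (\<lambda>b. \<Sum>g\<in>G. c g * B g b) = (\<Sum>g\<in>G. c g * Pbiv H s0 s1 \<alpha> (B g))"
  unfolding Pbiv_def Let_def wedge_vec_def
  by (simp add: sum_distrib_left sum_subtractf[symmetric] sum_swap_innermost3 algebra_simps)

lemma dl_commute: "dl a b = dl b a"
  by (simp add: dl_def eq_commute)

locale ribbon_structure =
  fixes H :: "'h set" and s0 s1 :: "'h \<Rightarrow> 'h"
  assumes finite_H: "finite H" and s0_permutes: "s0 permutes H" and s1_permutes: "s1 permutes H"
    and s1_involution: "\<forall>h\<in>H. s1 h \<noteq> h \<and> s1 (s1 h) = h"
begin

abbreviation edge :: "'h \<Rightarrow> 'h set" where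
  "edge \<equiv> edge_of s1"

abbreviation s2 :: "'h \<Rightarrow> 'h" where
  "s2 \<equiv> face_perm s0 s1"

lemma s2_permutes: "s2 permutes H"
  unfolding face_perm_def by (rule permutes_compose[OF s1_permutes permutes_inv[OF s0_permutes]])

lemma permutation_s0: "permutation s0" and permutation_s2: "permutation s2"
  using finite_H s0_permutes s2_permutes permutation_permutes by blast+

lemma s0_in: "u \<in> H \<Longrightarrow> s0 u \<in> H" and s1_in: "u \<in> H \<Longrightarrow> s1 u \<in> H"
  using permutes_in_image[OF s0_permutes] permutes_in_image[OF s1_permutes] by auto

lemma s2_s1_s0: "u \<in> H \<Longrightarrow> s2 (s1 (s0 u)) = u"
  unfolding face_perm_def using s1_involution s0_in permutes_inverses(2)[OF s0_permutes] by auto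

lemma edge_s1: "g \<in> H \<Longrightarrow> edge (s1 g) = edge g"
  unfolding edge_of_def using s1_involution by auto

lemma sum_dl_edge:
  assumes "u \<in> H"
  shows "(\<Sum>g\<in>H. F g * dl (edge u) (edge g)) = F u + F (s1 u)"
proof -
  have "{g \<in> H. edge g = edge u} = {u, s1 u}"
    using assms s1_in s1_involution unfolding edge_of_def by (auto simp: doubleton_eq_iff)
  moreover have "s1 u \<noteq> u"
    using assms s1_involution by blast
  ultimately show ?thesis
    unfolding dl_def by (simp add: sum.inter_filter[OF finite_H, symmetric] if_distrib cong: if_cong)
qed

definition face_potential :: "('h set \<Rightarrow> real) \<Rightarrow> 'h \<Rightarrow> real" where
  "face_potential Y g =
     (let r = rep (orb s2 g)
      in tail_minus_head (\<lambda>k. Y (edge ((s2 ^^ k) r))) (cyc_len s2 r) (LEAST j. (s2 ^^ j) r = g))"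

lemma face_potential_funpow:
  assumes "j < cyc_len s2 (rep (orb s2 h))"
  shows "face_potential Y ((s2 ^^ j) (rep (orb s2 h))) =
    tail_minus_head (\<lambda>k. Y (edge ((s2 ^^ k) (rep (orb s2 h))))) (cyc_len s2 (rep (orb s2 h))) j"
proof -
  let ?r = "rep (orb s2 h)"
  have "(s2 ^^ j) ?r \<in> orb s2 ?r"
    unfolding orb_def by blast
  then have "orb s2 ((s2 ^^ j) ?r) = orb s2 h"
    using orb_eq[OF permutation_s2] orb_rep_orb[OF permutation_s2] by metis
  then show ?thesis
    unfolding face_potential_def using Least_funpow_eq[OF permutation_s2 assms] by (simp add: Let_def)
qed

lemma Omega_eq_sum_face_potential:
  "Omega H s0 s1 X Y = (\<Sum>g\<in>H. X (edge g) * face_potential Y g)"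
proof -
  have "eta_face s0 s1 f X Y = (\<Sum>g\<in>f. X (edge g) * face_potential Y g)" if "f \<in> orb s2 ` H" for f
  proof -
    from that obtain h where f: "f = orb s2 h" by blast
    define r where "r = rep f"
    define n where "n = cyc_len s2 r"
    have "eta_face s0 s1 f X Y =
        (\<Sum>j<n. X (edge ((s2 ^^ j) r)) * tail_minus_head (\<lambda>k. Y (edge ((s2 ^^ k) r))) n j)"
      using sum_pairs_regroup[where c = "\<lambda>_. 1" and x = "\<lambda>j. X (edge ((s2 ^^ j) r))"
          and y = "\<lambda>k. Y (edge ((s2 ^^ k) r))" and n = n]
      unfolding eta_face_def Let_def wedge_form_def tail_minus_head_def r_def n_def by simp
    also have "\<dots> = (\<Sum>j<n. X (edge ((s2 ^^ j) r)) * face_potential Y ((s2 ^^ j) r))"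
      unfolding n_def r_def f by (simp add: face_potential_funpow)
    also have "\<dots> = (\<Sum>g\<in>f. X (edge g) * face_potential Y g)"
      unfolding n_def r_def f by (rule sum_orb_rep[OF permutation_s2])
    finally show ?thesis .
  qed
  then have "Omega H s0 s1 X Y = (\<Sum>f\<in>orb s2 ` H. \<Sum>g\<in>f. X (edge g) * face_potential Y g)"
    unfolding Omega_def rg_faces_def by simp
  also have "\<dots> = (\<Sum>g\<in>H. X (edge g) * face_potential Y g)"
    by (rule sum_orbs[OF s2_permutes finite_H])
  finally show ?thesis .
qed

lemma face_potential_face_perm:
  assumes "cell_tangent H s0 s1 Y" "g \<in> H"
  shows "face_potential Y (s2 g) = face_potential Y g - Y (edge g) - Y (edge (s2 g))"
proof -
  define r where "r = rep (orb s2 g)"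
  define n where "n = cyc_len s2 r"
  define y where "y k = Y (edge ((s2 ^^ k) r))" for k
  obtain j where j: "j < n" "g = (s2 ^^ j) r"
    using funpow_rep_orb[OF permutation_s2] unfolding r_def n_def by metis
  have s2g: "s2 g = (s2 ^^ (Suc j mod n)) r"
    using j funpow_mod_cyc_len[OF permutation_s2] unfolding n_def by simp
  have "0 < n"
    using cyc_len_pos[OF permutation_s2] unfolding n_def .
  then have "Suc j mod n < n" by simp
  have "orb s2 g \<in> rg_faces H s0 s1"
    unfolding rg_faces_def using assms(2) by blast
  with assms(1) have "(\<Sum>k<n. y k) = 0"
    unfolding cell_tangent_def perimeter_def Let_def r_def n_def y_def by blast
  with \<open>j < n\<close> have "tail_minus_head y n (Suc j mod n) = tail_minus_head y n j - y j - y (Suc j mod n)"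
    by (rule tail_minus_head_step)
  moreover have fp: "face_potential Y ((s2 ^^ i) r) = tail_minus_head y n i" if "i < n" for i
    using face_potential_funpow[of i g Y] that unfolding y_def r_def n_def by simp
  then have "face_potential Y g = tail_minus_head y n j"
    "face_potential Y (s2 g) = tail_minus_head y n (Suc j mod n)"
    using \<open>j < n\<close> \<open>Suc j mod n < n\<close> j(2) s2g by simp_all
  moreover have "y j = Y (edge g)" "y (Suc j mod n) = Y (edge (s2 g))"
    unfolding y_def using j(2) s2g by simp_all
  ultimately show ?thesis by simp
qed

lemma face_potential_corner:
  assumes "cell_tangent H s0 s1 Y" "u \<in> H"
  shows "face_potential Y (s1 (s0 u)) = face_potential Y u + Y (edge (s0 u)) + Y (edge u)"
  using face_potential_face_perm[OF assms(1) s1_in[OF s0_in[OF assms(2)]]]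
  by (simp add: s2_s1_s0[OF assms(2)] edge_s1[OF s0_in[OF assms(2)]])

lemma Pbiv_odd_vertices:
  assumes odd: "\<forall>h\<in>H. odd (valence s0 h)"
    and \<beta>: "\<forall>u\<in>H. \<beta> (edge u) = W u + W (s0 u)"
  shows "Pbiv H s0 s1 \<alpha> \<beta> = 1/4 * (\<Sum>u\<in>H. \<alpha> (edge u) * (W (s0 u) - W u))"
proof -
  have "(\<Sum>k<cyc_len s0 (rep x). \<Sum>j<k. (-1) ^ (k - j - 1) *
          wedge_vec (edge ((s0 ^^ j) (rep x))) (edge ((s0 ^^ k) (rep x))) \<alpha> \<beta>)
        = (\<Sum>u\<in>x. \<alpha> (edge u) * (W (s0 u) - W u))" if "x \<in> orb s0 ` H" for x
  proof -
    from that obtain h where h: "h \<in> H" "x = orb s0 h" by blast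
    define r where "r = rep x"
    define n where "n = cyc_len s0 r"
    have "r \<in> H"
      using rep_orb_in[OF permutation_s0] orb_subset[OF s0_permutes h(1)] h(2) r_def by blast
    with odd have "odd n"
      unfolding n_def valence_def by blast
    have s0_funpow: "(s0 ^^ (Suc k mod n)) r = s0 ((s0 ^^ k) r)" for k
      using funpow_mod_cyc_len[OF permutation_s0] unfolding n_def by simp
    have "(\<Sum>k<n. \<Sum>j<k. (-1) ^ (k - j - 1) * wedge_vec (edge ((s0 ^^ j) r)) (edge ((s0 ^^ k) r)) \<alpha> \<beta>)
        = (\<Sum>j<n. \<alpha> (edge ((s0 ^^ j) r)) * (W ((s0 ^^ (Suc j mod n)) r) - W ((s0 ^^ j) r)))"
      unfolding wedge_vec_def
    proof (rule sum_alternating_pairs_odd_cycle[OF \<open>odd n\<close>])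
      show "\<beta> (edge ((s0 ^^ k) r)) = W ((s0 ^^ k) r) + W ((s0 ^^ (Suc k mod n)) r)" for k
        using \<beta> permutes_in_funpow_image[OF s0_permutes \<open>r \<in> H\<close>] s0_funpow by simp
    qed
    also have "\<dots> = (\<Sum>u\<in>x. \<alpha> (edge u) * (W (s0 u) - W u))"
      unfolding s0_funpow unfolding n_def r_def h(2) by (rule sum_orb_rep[OF permutation_s0])
    finally show ?thesis
      unfolding r_def n_def .
  qed
  then have "Pbiv H s0 s1 \<alpha> \<beta> = 1/4 * (\<Sum>x\<in>orb s0 ` H. \<Sum>u\<in>x. \<alpha> (edge u) * (W (s0 u) - W u))"
    unfolding Pbiv_def rg_vertices_def Let_def by simp
  also have "\<dots> = 1/4 * (\<Sum>u\<in>H. \<alpha> (edge u) * (W (s0 u) - W u))"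
    by (simp only: sum_orbs[OF s0_permutes finite_H])
  finally show ?thesis .
qed

lemma Omega_contr_P_contr:
  "Omega_contr H s0 s1 (P_contr H s0 s1 \<alpha>) Y =
     Pbiv H s0 s1 \<alpha> (\<lambda>b. \<Sum>g\<in>H. face_potential Y g * dl (edge g) b)"
  unfolding Omega_contr_def P_contr_def Omega_eq_sum_face_potential Pbiv_sum_right
  by (simp only: mult.commute)

definition vertex_potential :: "('h set \<Rightarrow> real) \<Rightarrow> 'h \<Rightarrow> real" where
  "vertex_potential Y u = face_potential Y (s1 u) - Y (edge u)"

lemma sum_face_potential_dl_edge:
  assumes "cell_tangent H s0 s1 Y" "u \<in> H"
  shows "(\<Sum>g\<in>H. face_potential Y g * dl (edge g) (edge u)) =
    vertex_potential Y u + vertex_potential Y (s0 u)"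
proof -
  have "(\<Sum>g\<in>H. face_potential Y g * dl (edge g) (edge u)) = face_potential Y u + face_potential Y (s1 u)"
    using sum_dl_edge[OF assms(2)] by (simp only: dl_commute[of "edge u"])
  then show ?thesis
    using face_potential_corner[OF assms] unfolding vertex_potential_def by simp
qed

lemma vertex_potential_edge:
  assumes "cell_tangent H s0 s1 Y" "h \<in> H"
  shows "vertex_potential Y (s0 h) - vertex_potential Y h
      + (vertex_potential Y (s0 (s1 h)) - vertex_potential Y (s1 h)) = 4 * Y (edge h)"
proof -
  have "s1 (s1 h) = h" "edge (s1 h) = edge h"
    using s1_involution edge_s1 assms(2) by blast+
  then show ?thesis
    using face_potential_corner[OF assms] face_potential_corner[OF assms(1) s1_in[OF assms(2)]]
    unfolding vertex_potential_def by simp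
qed

end

theorem mainTheorem6:
  fixes H :: "'h set" and s0 s1 :: "'h \<Rightarrow> 'h" and e :: "'h set"
  assumes "ribbon_graph H s0 s1"
    and "\<forall>h\<in>H. 3 \<le> valence s0 h"
    and "\<forall>h\<in>H. odd (valence s0 h)"
    and "e \<in> rg_edges H s1"
  shows "\<forall>Y. cell_tangent H s0 s1 Y \<longrightarrow>
           Omega_contr H s0 s1 (P_contr H s0 s1 (dl e)) Y = Y e"
proof (intro allI impI)
  fix Y assume Y: "cell_tangent H s0 s1 Y"
  interpret ribbon_structure H s0 s1
    using assms(1) unfolding ribbon_graph_def by unfold_locales auto
  obtain h where h: "h \<in> H" "e = edge h"
    using assms(4) unfolding rg_edges_def by blast
  let ?W = "vertex_potential Y"
  have "Omega_contr H s0 s1 (P_contr H s0 s1 (dl e)) Y =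
      Pbiv H s0 s1 (dl e) (\<lambda>b. \<Sum>g\<in>H. face_potential Y g * dl (edge g) b)"
    by (rule Omega_contr_P_contr)
  also have "\<dots> = 1/4 * (\<Sum>u\<in>H. dl e (edge u) * (?W (s0 u) - ?W u))"
    by (rule Pbiv_odd_vertices[OF assms(3)]) (simp add: sum_face_potential_dl_edge[OF Y])
  also have "\<dots> = 1/4 * (?W (s0 h) - ?W h + (?W (s0 (s1 h)) - ?W (s1 h)))"
    using sum_dl_edge[OF h(1), of "\<lambda>u. ?W (s0 u) - ?W u"] by (simp add: h(2) mult.commute)
  also have "\<dots> = Y e"
    using vertex_potential_edge[OF Y h(1)] h(2) by simp
  finally show "Omega_contr H s0 s1 (P_contr H s0 s1 (dl e)) Y = Y e" .
qed

end
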